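(* Let $N=N_1+N_2$ with $N_1\ge0$, $N_2\ge1$, $N<L$, let $Y=(y_1,\dots,y_{N_2})\in\mathbb Z^{N_2}$ with $-L+N_1+1\le y_1<\cdots<y_{N_2}=0$, let $z_1\ne0$, and let $w_1,\dots,w_N\in\mathcal S_{z_1}$. Then $$\sum_{\tilde Y\in\tilde{\mathcal Y}_{N_1}(L;y_1)}\det\big[w_i^j(w_i+1)^{\tilde y_j-j}1_{j\le N_1}+w_i^j(w_i+1)^{y_{j-N_1}-j}1_{j>N_1}\big]_{i,j=1}^N=\det\big[w_i^{j-1}(w_i+1)^{y_1-N_1}1_{j\le N_1}+w_i^j(w_i+1)^{y_{j-N_1}-j}1_{j>N_1}\big]_{i,j=1}^N.$$
   Context: $\mathcal S_z$ is the set of roots of $w^N(w+1)^{L-N}=z^L$. $\tilde{\mathcal Y}_{N_1}(L;y_1)=\{(\tilde y_1,\dots,\tilde y_{N_1})\in\mathbb Z^{N_1}:-L+1\le\tilde y_1<\cdots<\tilde y_{N_1}\le y_1-1\}$. *)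

theory Defs
  imports Complex_Main "Jordan_Normal_Form.Determinant"
begin

definition S_set :: "nat \<Rightarrow> nat \<Rightarrow> complex \<Rightarrow> complex set" where
  "S_set N L z = {w. w ^ N * (w + 1) ^ (L - N) = z ^ L}"

text \<open>Ytilde_{N1}(L; y1): strictly increasing integer N1-tuples with entries in [-L+1, y1-1],
  represented as lists (entry j, 1-based, is the list element at index j-1).\<close>
definition Ytilde :: "nat \<Rightarrow> nat \<Rightarrow> int \<Rightarrow> int list set" where
  "Ytilde N1 L y1 = {ys. length ys = N1 \<and> sorted_wrt (<) ys \<and>
      (\<forall>y\<in>set ys. - int L + 1 \<le> y \<and> y \<le> y1 - 1)}"

end

theory Submission
  imports Defs
begin

text \<open>Since w = (w + 1) - 1, the entry w^(j+1) (w + 1)^(t-(j+1)) is a difference in t of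
  w^j (w + 1)^(t-j), so summing a column over the last free coordinate of \<open>Ytilde\<close>
  telescopes.  The upper end of the range gives the corresponding column of the right-hand
  side; the lower end gives a copy of the previous column, or, for the first column, the
  vector (w + 1)^(-L), which on the roots in S_z is proportional to the last column
  w^N (w + 1)^(y_{N2}-N) = w^N (w + 1)^(-N).  So those determinants vanish, and the
  coordinates can be summed out one by one from the last to the first.\<close>

definition det_cols :: "nat \<Rightarrow> (nat \<Rightarrow> nat \<Rightarrow> 'a :: comm_ring_1) \<Rightarrow> 'a" where
  "det_cols n c = det (mat n n (\<lambda>(i, j). c j i))"

lemma det_cols_cong:
  assumes "\<And>i j. i < n \<Longrightarrow> j < n \<Longrightarrow> c j i = c' j i"
  shows "det_cols n c = det_cols n c'"
  unfolding det_cols_def using assms by (intro arg_cong[where f = det] cong_mat) auto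

lemma det_cols_expand:
  "det_cols n c = (\<Sum>p | p permutes {0..<n}. signof p * (\<Prod>j<n. c j (p j)))"
  unfolding det_cols_def
  by (subst det_col[of _ n]) (auto intro!: sum.cong prod.cong simp: permutes_in_image)

lemma det_cols_update_linear:
  assumes "k < n"
  shows "det_cols n (c(k := (\<lambda>i. a * u i + b * v i)))
       = a * det_cols n (c(k := u)) + b * det_cols n (c(k := v))"
proof -
  have "(\<Prod>j<n. (c(k := f)) j (p j)) = f (p k) * (\<Prod>j\<in>{..<n} - {k}. c j (p j))" for f p
    using assms by (simp add: prod.remove)
  then show ?thesis
    unfolding det_cols_expand
    by (simp add: sum_distrib_left sum.distrib algebra_simps)
qed

lemma det_cols_proportional_cols:
  assumes "k < n" "k' < n" "k \<noteq> k'" "\<And>i. i < n \<Longrightarrow> c k i = a * c k' i"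
  shows "det_cols n c = 0"
proof -
  have "det_cols n c = det_cols n (c(k := (\<lambda>i. a * c k' i + 0 * c k' i)))"
    using assms by (intro det_cols_cong) auto
  also have "\<dots> = a * det_cols n (c(k := c k'))"
    using assms(1) by (simp only: det_cols_update_linear) simp
  also have "det_cols n (c(k := c k')) = 0"
    unfolding det_cols_def using assms(1-3)
    by (intro det_identical_columns[of _ n k k']) auto
  finally show ?thesis by simp
qed

lemma sum_int_interval_telescope:
  fixes g :: "int \<Rightarrow> 'a :: ab_group_add"
  assumes "lo \<le> hi + 1"
  shows "(\<Sum>t\<in>{lo..hi}. g t - g (t - 1)) = g hi - g (lo - 1)"
proof -
  have "lo - 1 \<le> hi" using assms by simp
  then show ?thesis
  proof (induction hi rule: int_ge_induct)
    case base
    then show ?case by simp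
  next
    case (step hi)
    have "{lo..hi + 1} = insert (hi + 1) {lo..hi}"
      using step.hyps by auto
    with step show ?case by simp
  qed
qed

lemma det_cols_sum_telescope:
  fixes lo hi :: int
  assumes "k < n" "lo \<le> hi + 1"
  shows "(\<Sum>t\<in>{lo..hi}. det_cols n (c(k := (\<lambda>i. g t i - g (t - 1) i))))
       = det_cols n (c(k := g hi)) - det_cols n (c(k := g (lo - 1)))"
proof -
  have "det_cols n (c(k := (\<lambda>i. g t i - g (t - 1) i)))
      = det_cols n (c(k := g t)) - det_cols n (c(k := g (t - 1)))" for t
    using det_cols_update_linear[OF assms(1), of c 1 "g t" "-1" "g (t - 1)"] by simp
  then show ?thesis
    using sum_int_interval_telescope[OF assms(2), of "\<lambda>t. det_cols n (c(k := g t))"] by simp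
qed

definition shifted_entry :: "nat \<Rightarrow> int \<Rightarrow> 'a :: field \<Rightarrow> 'a" where
  "shifted_entry m t x = x ^ m * (x + 1) powi (t - int m)"

lemma shifted_entry_Suc:
  assumes "x + 1 \<noteq> 0"
  shows "shifted_entry (Suc m) t x = shifted_entry m t x - shifted_entry m (t - 1) x"
proof -
  have "(x + 1) powi (t - int m) = (x + 1) powi (t - int (Suc m)) * (x + 1)"
    using assms power_int_add_1[of "x + 1" "t - int (Suc m)"] by simp
  then show ?thesis
    unfolding shifted_entry_def by (simp add: algebra_simps)
qed

lemma S_set_plus_one_nonzero:
  assumes "w \<in> S_set n L z" "z \<noteq> 0" "n < L"
  shows "w + 1 \<noteq> 0"
proof
  assume "w + 1 = 0"
  then have "z ^ L = 0"
    using assms(1,3) by (simp add: S_set_def power_0_left)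
  with assms(2) show False by simp
qed

lemma S_set_shifted_entry_neg_L:
  assumes "w \<in> S_set n L z" "z \<noteq> 0" "n < L"
  shows "shifted_entry 0 (- int L) w = inverse (z ^ L) * shifted_entry n 0 w"
proof -
  have w1: "w + 1 \<noteq> 0"
    using S_set_plus_one_nonzero[OF assms] .
  have "(w + 1) ^ (L - n) = (w + 1) powi (int L - int n)"
    by (simp only: power_int_of_nat[symmetric] of_nat_diff[OF less_imp_le[OF assms(3)]])
  then have zL: "z ^ L = w ^ n * (w + 1) powi (int L - int n)"
    using assms(1) by (simp add: S_set_def)
  with assms(2) have "w ^ n \<noteq> 0"
    by (metis mult_zero_left power_not_zero)
  then have "inverse (z ^ L) * shifted_entry n 0 w = (w + 1) powi (- int n) / (w + 1) powi (int L - int n)"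
    by (simp add: zL shifted_entry_def field_simps)
  also have "\<dots> = (w + 1) powi (- int L)"
    using w1 by (simp add: power_int_diff[symmetric])
  finally show ?thesis
    by (simp add: shifted_entry_def)
qed

lemma sorted_wrt_less_imp_le_last:
  fixes xs :: "'a :: linorder list"
  assumes "sorted_wrt (<) xs" "v \<in> set xs"
  shows "v \<le> last xs"
  using assms by (cases xs rule: rev_cases) (auto simp: sorted_wrt_append)

definition incr_lists :: "nat \<Rightarrow> int \<Rightarrow> int \<Rightarrow> int list set" where
  "incr_lists k a b = {ys. length ys = k \<and> sorted_wrt (<) ys \<and> set ys \<subseteq> {a..b}}"

lemma finite_incr_lists: "finite (incr_lists k a b)"
proof (rule finite_subset)
  show "incr_lists k a b \<subseteq> {ys. set ys \<subseteq> {a..b} \<and> length ys = k}"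
    by (auto simp: incr_lists_def)
qed (rule finite_lists_length_eq[OF finite_atLeastAtMost_int])

lemma incr_lists_Suc:
  "incr_lists (Suc k) a b = (\<lambda>(xs, t). xs @ [t]) `
     (SIGMA xs:incr_lists k a (b - 1). {(if xs = [] then a else last xs + 1)..b})"
  (is "_ = _ ` ?S")
proof (intro equalityI subsetI)
  fix ys assume ys: "ys \<in> incr_lists (Suc k) a b"
  then obtain xs t where ys_eq: "ys = xs @ [t]"
    by (cases ys rule: rev_cases) (auto simp: incr_lists_def)
  with ys have xs: "length xs = k" "sorted_wrt (<) xs" "set xs \<subseteq> {a..b}"
    and t: "a \<le> t" "t \<le> b" and less_t: "\<And>v. v \<in> set xs \<Longrightarrow> v < t"
    by (auto simp: incr_lists_def sorted_wrt_append)
  have "xs \<in> incr_lists k a (b - 1)"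
    using xs t less_t by (fastforce simp: incr_lists_def)
  moreover have "(if xs = [] then a else last xs + 1) \<le> t"
    using t less_t[OF last_in_set] by auto
  ultimately show "ys \<in> (\<lambda>(xs, t). xs @ [t]) ` ?S"
    using ys_eq t by (intro rev_image_eqI[of "(xs, t)"]) auto
next
  fix ys assume "ys \<in> (\<lambda>(xs, t). xs @ [t]) ` ?S"
  then obtain xs t where xs: "xs \<in> incr_lists k a (b - 1)"
    and t: "(if xs = [] then a else last xs + 1) \<le> t" "t \<le> b" and ys_eq: "ys = xs @ [t]"
    by auto
  have less_t: "v < t" if "v \<in> set xs" for v
    using sorted_wrt_less_imp_le_last[of xs v] xs t that by (auto simp: incr_lists_def split: if_splits)
  have "a \<le> t"
  proof (cases "xs = []")
    case False
    then have "last xs \<in> {a..b - 1}"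
      using xs last_in_set[OF False] unfolding incr_lists_def by blast
    with False t show ?thesis by simp
  qed (use t in simp)
  then show "ys \<in> incr_lists (Suc k) a b"
    using xs t less_t ys_eq by (auto simp: incr_lists_def sorted_wrt_append)
qed

lemma sum_incr_lists_Suc:
  "(\<Sum>ys\<in>incr_lists (Suc k) a b. f ys)
     = (\<Sum>xs\<in>incr_lists k a (b - 1). \<Sum>t\<in>{(if xs = [] then a else last xs + 1)..b}. f (xs @ [t]))"
proof -
  have "inj_on (\<lambda>(xs, t). xs @ [t]) X" for X :: "(int list \<times> int) set"
    by (auto simp: inj_on_def)
  then have "(\<Sum>ys\<in>incr_lists (Suc k) a b. f ys)
      = (\<Sum>(xs, t)\<in>(SIGMA xs:incr_lists k a (b - 1). {(if xs = [] then a else last xs + 1)..b}). f (xs @ [t]))"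
    unfolding incr_lists_Suc by (simp add: sum.reindex case_prod_unfold)
  also have "\<dots> = (\<Sum>xs\<in>incr_lists k a (b - 1). \<Sum>t\<in>{(if xs = [] then a else last xs + 1)..b}. f (xs @ [t]))"
    by (rule sum.Sigma[symmetric]) (auto simp: finite_incr_lists)
  finally show ?thesis .
qed

locale bethe_columns =
  fixes N1 N2 L :: nat and y :: "nat \<Rightarrow> int" and z :: complex and W :: "nat \<Rightarrow> complex"
  assumes N2_pos: "1 \<le> N2"
    and y_last: "y N2 = 0"
    and y_1_lower: "- int L + int N1 + 1 \<le> y 1"
    and roots: "\<And>i. i < N1 + N2 \<Longrightarrow> W i \<in> S_set (N1 + N2) L z"
    and z_nonzero: "z \<noteq> 0"
    and size_less: "N1 + N2 < L"
begin

abbreviation n :: nat where "n \<equiv> N1 + N2"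

lemma W_plus_one_nonzero: "i < n \<Longrightarrow> W i + 1 \<noteq> 0"
  by (rule S_set_plus_one_nonzero[OF roots z_nonzero size_less])

text \<open>The columns once the coordinates of \<open>Ytilde\<close> beyond \<open>ys\<close> have been summed out.\<close>

definition partial_cols :: "int list \<Rightarrow> nat \<Rightarrow> nat \<Rightarrow> complex" where
  "partial_cols ys j i =
     (if j < length ys then shifted_entry (Suc j) (ys ! j) (W i)
      else if j < N1 then shifted_entry j (y 1 - int N1 + int j) (W i)
      else shifted_entry (Suc j) (y (Suc j - N1)) (W i))"

lemma partial_cols_snoc:
  assumes "length xs < N1"
  shows "partial_cols (xs @ [t])
       = (partial_cols xs)(length xs := (\<lambda>i. shifted_entry (Suc (length xs)) t (W i)))"
  using assms by (auto simp: partial_cols_def fun_eq_iff nth_append)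

lemma det_partial_cols_lower_vanishes:
  assumes "k < N1" "length xs = k"
  shows "det_cols n ((partial_cols xs)(k := (\<lambda>i. shifted_entry k (if xs = [] then - int L else last xs) (W i)))) = 0"
proof (cases "xs = []")
  case True
  have last_col: "partial_cols [] (n - 1) i = shifted_entry n 0 (W i)" for i
  proof -
    have "\<not> n - 1 < N1" "Suc (n - 1) = n"
      using N2_pos by auto
    then show ?thesis
      using y_last by (simp add: partial_cols_def)
  qed
  have "det_cols n ((partial_cols [])(0 := (\<lambda>i. shifted_entry 0 (- int L) (W i)))) = 0"
    using assms(1) N2_pos last_col S_set_shifted_entry_neg_L[OF roots z_nonzero size_less]
    by (intro det_cols_proportional_cols[where k = 0 and k' = "n - 1" and a = "inverse (z ^ L)"]) auto
  with True assms(2) show ?thesis by simp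
next
  case False
  then obtain k' where k: "k = Suc k'"
    using assms(2) by (cases k) auto
  have "last xs = xs ! k'"
    using False assms(2) k by (simp add: last_conv_nth)
  then show ?thesis
    using assms False k
    by (intro det_cols_proportional_cols[where k = k and k' = k' and a = 1]) (auto simp: partial_cols_def)
qed

lemma sum_det_partial_cols_snoc:
  assumes "k < N1" and xs: "xs \<in> incr_lists k (- int L + 1) (y 1 - int N1 + int k - 1)"
  shows "(\<Sum>t\<in>{(if xs = [] then - int L + 1 else last xs + 1)..y 1 - int N1 + int k}.
            det_cols n (partial_cols (xs @ [t])))
       = det_cols n (partial_cols xs)"
proof -
  let ?lo = "if xs = [] then - int L + 1 else last xs + 1"
  let ?hi = "y 1 - int N1 + int k"
  define g where "g t i = shifted_entry k t (W i)" for t i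
  have len: "length xs = k"
    using xs by (simp add: incr_lists_def)
  have "?lo \<le> ?hi + 1"
  proof (cases "xs = []")
    case True
    then show ?thesis using len y_1_lower by simp
  next
    case False
    then have "last xs \<in> {- int L + 1..?hi - 1}"
      using xs last_in_set[OF False] unfolding incr_lists_def by blast
    with False show ?thesis by simp
  qed
  have "det_cols n (partial_cols (xs @ [t]))
      = det_cols n ((partial_cols xs)(k := (\<lambda>i. g t i - g (t - 1) i)))" for t
    unfolding partial_cols_snoc[OF assms(1)[folded len]] len
    by (intro det_cols_cong) (simp add: g_def shifted_entry_Suc W_plus_one_nonzero)
  then have "(\<Sum>t\<in>{?lo..?hi}. det_cols n (partial_cols (xs @ [t])))
      = (\<Sum>t\<in>{?lo..?hi}. det_cols n ((partial_cols xs)(k := (\<lambda>i. g t i - g (t - 1) i))))"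
    by simp
  also have "\<dots> = det_cols n ((partial_cols xs)(k := g ?hi)) - det_cols n ((partial_cols xs)(k := g (?lo - 1)))"
    using assms(1) by (intro det_cols_sum_telescope \<open>?lo \<le> ?hi + 1\<close>) simp
  also have "(partial_cols xs)(k := g ?hi) = partial_cols xs"
    using len assms(1) by (auto simp: fun_eq_iff partial_cols_def g_def)
  also have "g (?lo - 1) = (\<lambda>i. shifted_entry k (if xs = [] then - int L else last xs) (W i))"
    by (auto simp: g_def)
  also have "det_cols n ((partial_cols xs)(k := \<dots>)) = 0"
    by (rule det_partial_cols_lower_vanishes[OF assms(1) len])
  finally show ?thesis by simp
qed

lemma sum_det_partial_cols:
  "k \<le> N1 \<Longrightarrow> (\<Sum>ys\<in>incr_lists k (- int L + 1) (y 1 - int N1 + int k - 1). det_cols n (partial_cols ys))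
     = det_cols n (partial_cols [])"
proof (induction k)
  case 0
  have "incr_lists 0 a b = {[]}" for a b
    by (auto simp: incr_lists_def)
  then show ?case by simp
next
  case (Suc k)
  have "y 1 - int N1 + int (Suc k) - 1 - 1 = y 1 - int N1 + int k - 1"
    by simp
  then show ?case
    using Suc sum_det_partial_cols_snoc[of k]
    by (simp only: sum_incr_lists_Suc) (simp add: algebra_simps)
qed

end

theorem lemma11p8:
  fixes N1 N2 L :: nat and y :: "nat \<Rightarrow> int" and z1 :: complex and w :: "nat \<Rightarrow> complex"
  assumes "N2 \<ge> 1" and "N1 + N2 < L"
    and "- int L + int N1 + 1 \<le> y 1"
    and "\<And>a b. 1 \<le> a \<Longrightarrow> a < b \<Longrightarrow> b \<le> N2 \<Longrightarrow> y a < y b"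
    and "y N2 = 0"
    and "z1 \<noteq> 0"
    and "\<And>i. 1 \<le> i \<Longrightarrow> i \<le> N1 + N2 \<Longrightarrow> w i \<in> S_set (N1 + N2) L z1"
  shows "(\<Sum>ys\<in>Ytilde N1 L (y 1).
           det (mat (N1 + N2) (N1 + N2) (\<lambda>(i, j).
             (if j + 1 \<le> N1
              then w (i + 1) ^ (j + 1) * (w (i + 1) + 1) powi (ys ! j - int (j + 1))
              else w (i + 1) ^ (j + 1) * (w (i + 1) + 1) powi (y (j + 1 - N1) - int (j + 1))))))
       = det (mat (N1 + N2) (N1 + N2) (\<lambda>(i, j).
             (if j + 1 \<le> N1
              then w (i + 1) ^ j * (w (i + 1) + 1) powi (y 1 - int N1)
              else w (i + 1) ^ (j + 1) * (w (i + 1) + 1) powi (y (j + 1 - N1) - int (j + 1)))))"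
proof -
  interpret bethe_columns N1 N2 L y z1 "\<lambda>i. w (i + 1)"
    using assms(1-3,5-7) by unfold_locales auto
  have "Ytilde N1 L (y 1) = incr_lists N1 (- int L + 1) (y 1 - int N1 + int N1 - 1)"
    by (auto simp: Ytilde_def incr_lists_def)
  then have sum_eq: "(\<Sum>ys\<in>Ytilde N1 L (y 1). det_cols n (partial_cols ys)) = det_cols n (partial_cols [])"
    using sum_det_partial_cols[of N1] by simp
  show ?thesis (is "(\<Sum>ys\<in>_. ?lhs ys) = ?rhs")
  proof -
    have "?lhs ys = det_cols n (partial_cols ys)" if "ys \<in> Ytilde N1 L (y 1)" for ys
    proof -
      have "length ys = N1"
        using that by (simp add: Ytilde_def)
      then show ?thesis
        unfolding det_cols_def partial_cols_def shifted_entry_def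
        by (intro arg_cong[where f = det] cong_mat) auto
    qed
    moreover have "?rhs = det_cols n (partial_cols [])"
      unfolding det_cols_def partial_cols_def shifted_entry_def
      by (intro arg_cong[where f = det] cong_mat) auto
    ultimately show ?thesis
      using sum_eq by simp
  qed
qed

end
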